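(* Let $\{Y_{\mathbf z}\}_{\mathbf z\in\mathbb Z^2}$ be arbitrary positive real numbers and $\{W_k\}_{k\in\mathbb Z}$ arbitrary positive real numbers with $W_0=1$. Then for each $\mathbf a\in\mathbb Z^2_{>0}$ and each integer $k\ge1$, $$\frac{Z^W_{\mathbf a}(|\tau|\le k)}{Z^W_{\mathbf a-\mathbf e_1}(|\tau|\le k)}\le\frac{Z^W_{\mathbf a}(\tau\ge0)}{Z^W_{\mathbf a-\mathbf e_1}(\tau\ge0)}\qquad\text{and}\qquad\frac{Z^W_{\mathbf a}(|\tau|\le k)}{Z^W_{\mathbf a-\mathbf e_2}(|\tau|\le k)}\ge\frac{Z^W_{\mathbf a}(\tau\ge0)}{Z^W_{\mathbf a-\mathbf e_2}(\tau\ge0)}.$$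
   Context: $\mathbf e_1=(1,0)$, $\mathbf e_2=(0,1)$. For $\mathbf u,\mathbf v\in\mathbb Z^2$, $\widetilde Z_{\mathbf u,\mathbf v}=\sum_{\mathbf x_\bullet}\prod_{i=1}^nY_{\mathbf x_i}$, $n=|\mathbf v-\mathbf u|_1$, summing over up-right lattice paths $\mathbf x_0=\mathbf u,\dots,\mathbf x_n=\mathbf v$ (the weight at the starting point is excluded), $\widetilde Z_{\mathbf u,\mathbf u}=1$, and $\widetilde Z_{\mathbf u,\mathbf v}=0$ if no such path exists. For a set $\mathcal K\subset\mathbb Z$ and $\mathbf v$ with positive coordinate sum, $Z^W_{\mathbf v}(\tau\in\mathcal K)=\sum_{j\in\mathcal K}W_j\widetilde Z_{(j,-j),\mathbf v}$; thus $Z^W_{\mathbf v}(|\tau|\le k)=\sum_{|j|\le k}W_j\widetilde Z_{(j,-j),\mathbf v}$ and $Z^W_{\mathbf v}(\tau\ge0)=\sum_{j\ge0}W_j\widetilde Z_{(j,-j),\mathbf v}$. *)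

theory Defs
  imports "HOL-Analysis.Analysis"
begin

type_synonym pt = "int \<times> int"

definition e1 :: pt where "e1 = (1, 0)"
definition e2 :: pt where "e2 = (0, 1)"

text \<open>An up-right path of n steps starting at u is encoded by its step list
  s (True = step e1, False = step e2); its i-th point is path_pt u s i.\<close>
definition path_pt :: "pt \<Rightarrow> bool list \<Rightarrow> nat \<Rightarrow> pt" where
  "path_pt u s i = u + (int (length (filter (\<lambda>b. b) (take i s))),
                        int (length (filter (\<lambda>b. \<not> b) (take i s))))"

definition l1dist :: "pt \<Rightarrow> pt \<Rightarrow> nat" where
  "l1dist u v = nat (\<bar>fst v - fst u\<bar> + \<bar>snd v - snd u\<bar>)"

text \<open>Point-to-point partition function, weight at the starting point excluded.\<close>
definition Ztil :: "(pt \<Rightarrow> real) \<Rightarrow> pt \<Rightarrow> pt \<Rightarrow> real" where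
  "Ztil Y u v =
     (\<Sum>s\<in>{s. length s = l1dist u v \<and> path_pt u s (l1dist u v) = v}.
        \<Prod>i\<in>{1..l1dist u v}. Y (path_pt u s i))"

text \<open>Z^W_v(tau in K) = sum over j in K of W_j * Ztil((j,-j), v).\<close>
definition ZW :: "(pt \<Rightarrow> real) \<Rightarrow> (int \<Rightarrow> real) \<Rightarrow> pt \<Rightarrow> int set \<Rightarrow> real" where
  "ZW Y W v K = infsum (\<lambda>j. W j * Ztil Y (j, -j) v) K"

end

theory Submission
  imports Defs
begin

text \<open>Write Z_j(v) for the partition function of up-right paths from (j,-j) to v.
  The last-step recursion Z_j(v) = Y_v (Z_j(v-e1) + Z_j(v-e2)) and induction over the
  antidiagonals x + y = n give the total positivity inequality
  Z_j(l,n-l) Z_j'(i,n-i) \<le> Z_j(i,n-i) Z_j'(l,n-l) for j \<le> j' and i \<le> l.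
  Applied to the two predecessors of a point v it shows that Z_j(v-e2)/Z_j(v-e1) increases
  with j, hence Z_j(a)/Z_j(a-e1) increases and Z_j(a)/Z_j(a-e2) decreases with j.
  Both sides of each claimed inequality are ratios of W-weighted sums of these functions
  over j. Outside their intersection, the indices of {|j| \<le> k} lie below those of
  {j \<ge> 0}, and exchanging weight in that direction cannot decrease a ratio of sums
  whose termwise ratio increases.\<close>

definition displacement :: "bool list \<Rightarrow> pt" where
  "displacement s =
     (int (length (filter (\<lambda>b. b) s)), int (length (filter (\<lambda>b. \<not> b) s)))"

definition path_weight :: "(pt \<Rightarrow> real) \<Rightarrow> pt \<Rightarrow> bool list \<Rightarrow> real" where
  "path_weight Y u s = (\<Prod>i\<in>{1..length s}. Y (path_pt u s i))"

lemma path_pt_eq: "path_pt u s i = u + displacement (take i s)"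
  by (simp add: path_pt_def displacement_def)

lemma displacement_Nil [simp]: "displacement [] = 0"
  by (simp add: displacement_def zero_prod_def)

lemma displacement_snoc_True [simp]: "displacement (s @ [True]) = displacement s + e1"
  and displacement_snoc_False [simp]: "displacement (s @ [False]) = displacement s + e2"
  by (simp_all add: displacement_def e1_def e2_def)

lemma displacement_nonneg: "fst (displacement s) \<ge> 0" "snd (displacement s) \<ge> 0"
  by (simp_all add: displacement_def)

lemma length_eq_displacement: "int (length s) = fst (displacement s) + snd (displacement s)"
  using sum_length_filter_compl[of "\<lambda>b. b" s] by (simp add: displacement_def)

lemma finite_displacement_eq: "finite {s. displacement s = d}"
proof (rule finite_subset)
  show "{s. displacement s = d} \<subseteq> {s. set s \<subseteq> UNIV \<and> length s = nat (fst d + snd d)}"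
    by (auto simp flip: length_eq_displacement)
qed (rule finite_lists_length_eq, simp)

lemma displacement_eq_split:
  assumes "d \<noteq> 0"
  shows "{s. displacement s = d} =
           (\<lambda>s. s @ [True]) ` {s. displacement s = d - e1} \<union>
           (\<lambda>s. s @ [False]) ` {s. displacement s = d - e2}" (is "_ = ?snoc")
proof (intro equalityI subsetI)
  fix s assume "s \<in> {s. displacement s = d}"
  with assms obtain t b where "s = t @ [b]" "displacement (t @ [b]) = d"
    by (metis displacement_Nil mem_Collect_eq rev_exhaust)
  then show "s \<in> ?snoc"
    by (cases b) auto
qed auto

lemma path_weight_snoc:
  "path_weight Y u (s @ [b]) = path_weight Y u s * Y (u + displacement (s @ [b]))"
proof -
  have "path_weight Y u (s @ [b])
      = (\<Prod>i\<in>{1..length s}. Y (path_pt u (s @ [b]) i)) * Y (path_pt u (s @ [b]) (Suc (length s)))"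
    unfolding path_weight_def by (simp add: prod.nat_ivl_Suc' mult.commute)
  also have "(\<Prod>i\<in>{1..length s}. Y (path_pt u (s @ [b]) i)) = path_weight Y u s"
    unfolding path_weight_def by (rule prod.cong) (auto simp: path_pt_def)
  finally show ?thesis by (simp add: path_pt_eq)
qed

lemma Ztil_eq_sum_paths: "Ztil Y u v = (\<Sum>s | displacement s = v - u. path_weight Y u s)"
proof -
  have paths: "{s. length s = l1dist u v \<and> path_pt u s (l1dist u v) = v} = {s. displacement s = v - u}"
    (is "?paths = _")
  proof (intro set_eqI iffI)
    fix s assume "s \<in> ?paths"
    then show "s \<in> {s. displacement s = v - u}" by (auto simp: path_pt_eq)
  next
    fix s assume "s \<in> {s. displacement s = v - u}"
    then have "l1dist u v = length s"
      using length_eq_displacement[of s] displacement_nonneg[of s] by (auto simp: l1dist_def)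
    with \<open>s \<in> {s. displacement s = v - u}\<close>
    show "s \<in> ?paths" by (simp add: path_pt_eq)
  qed
  show ?thesis
    unfolding Ztil_def path_weight_def by (rule sum.cong[OF paths]) (simp flip: paths)
qed

lemma Ztil_last_step:
  assumes "u \<noteq> v"
  shows "Ztil Y u v = Y v * (Ztil Y u (v - e1) + Ztil Y u (v - e2))"
proof -
  have split: "{s. displacement s = v - u} =
      (\<lambda>s. s @ [True]) ` {s. displacement s = v - e1 - u} \<union>
      (\<lambda>s. s @ [False]) ` {s. displacement s = v - e2 - u}"
    using displacement_eq_split[of "v - u"] assms by (simp add: algebra_simps)
  have last: "path_weight Y u (s @ [b]) = path_weight Y u s * Y v"
    if "displacement (s @ [b]) = v - u" for s b
    using that by (simp add: path_weight_snoc)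
  have "Ztil Y u v = (\<Sum>s | displacement s = v - e1 - u. path_weight Y u (s @ [True]))
                   + (\<Sum>s | displacement s = v - e2 - u. path_weight Y u (s @ [False]))"
    unfolding Ztil_eq_sum_paths split
    by (subst sum.union_disjoint) (auto simp: finite_displacement_eq sum.reindex inj_on_def)
  also have "\<dots> = Y v * (Ztil Y u (v - e1) + Ztil Y u (v - e2))"
    by (simp add: Ztil_eq_sum_paths last algebra_simps sum_distrib_left)
  finally show ?thesis .
qed

lemma Ztil_eq_0:
  assumes "fst v < fst u \<or> snd v < snd u"
  shows "Ztil Y u v = 0"
proof -
  have "displacement s \<noteq> v - u" for s
    using assms displacement_nonneg[of s] by auto
  then show ?thesis by (simp add: Ztil_eq_sum_paths)
qed

lemma Ztil_same [simp]: "Ztil Y u u = 1"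
proof -
  have "displacement s = 0 \<longleftrightarrow> s = []" for s
    using length_eq_displacement[of s] by (auto simp: prod_eq_iff)
  then show ?thesis by (simp add: Ztil_eq_sum_paths path_weight_def)
qed

lemma Ztil_nonneg: "(\<And>z. Y z \<ge> 0) \<Longrightarrow> Ztil Y u v \<ge> 0"
  unfolding Ztil_def by (intro sum_nonneg prod_nonneg) auto

lemma Ztil_pos:
  assumes Y: "\<And>z. Y z > 0" and "fst u \<le> fst v" "snd u \<le> snd v"
  shows "Ztil Y u v > 0"
proof -
  define s where
    "s = replicate (nat (fst v - fst u)) True @ replicate (nat (snd v - snd u)) False"
  have "displacement s = v - u"
    using assms by (simp add: s_def displacement_def prod_eq_iff)
  then show ?thesis
    unfolding Ztil_eq_sum_paths path_weight_def
    by (intro sum_pos2[of _ s] prod_pos)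
      (auto simp: finite_displacement_eq Y less_imp_le intro!: prod_nonneg)
qed

lemma Ztil_antidiagonal_to_antidiagonal: "Ztil Y (j, -j) (x, -x) = (if x = j then 1 else 0)"
  by (auto intro: Ztil_eq_0)

lemma Ztil_antidiagonal_cross:
  assumes Y: "\<And>z. Y z > 0" and "j \<le> j'" and "i \<le> l"
  shows "Ztil Y (j, -j) (l, n - l) * Ztil Y (j', -j') (i, n - i)
           \<le> Ztil Y (j, -j) (i, n - i) * Ztil Y (j', -j') (l, n - l)"
proof (cases "n < 0")
  case True
  then have "Ztil Y (j, -j) (x, n - x) = 0" for x
    by (intro Ztil_eq_0) auto
  then show ?thesis by simp
next
  case False
  then obtain m where n: "n = int m" by (metis nonneg_int_cases not_less)
  show ?thesis unfolding n using \<open>i \<le> l\<close>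
  proof (induction m arbitrary: i l)
    case 0
    then show ?case using \<open>j \<le> j'\<close> by (simp add: Ztil_antidiagonal_to_antidiagonal)
  next
    case (Suc m)
    define f where "f x = Ztil Y (j, -j) (x, int m - x)" for x
    define g where "g x = Ztil Y (j', -j') (x, int m - x)" for x
    have step: "Ztil Y (h, -h) (x, int (Suc m) - x)
        = Y (x, int (Suc m) - x) *
          (Ztil Y (h, -h) (x - 1, int m - (x - 1)) + Ztil Y (h, -h) (x, int m - x))" for h x
      using Ztil_last_step[of "(h, -h)" "(x, int (Suc m) - x)" Y]
      by (auto simp: e1_def e2_def algebra_simps)
    show ?case
    proof (cases "i = l")
      case False
      with Suc.prems have "i \<le> l - 1" by simp
      then have "f (l - 1) * g (i - 1) \<le> f (i - 1) * g (l - 1)"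
          "f (l - 1) * g i \<le> f i * g (l - 1)"
          "f l * g (i - 1) \<le> f (i - 1) * g l" "f l * g i \<le> f i * g l"
        using Suc.IH Suc.prems unfolding f_def g_def by auto
      then have "(f (l - 1) + f l) * (g (i - 1) + g i) \<le> (f (i - 1) + f i) * (g (l - 1) + g l)"
        by (simp only: distrib_left distrib_right)
      then have "Y (l, int (Suc m) - l) * Y (i, int (Suc m) - i) * ((f (l - 1) + f l) * (g (i - 1) + g i))
          \<le> Y (l, int (Suc m) - l) * Y (i, int (Suc m) - i) * ((f (i - 1) + f i) * (g (l - 1) + g l))"
        using Y by (intro mult_left_mono) (auto intro: less_imp_le)
      then show ?thesis
        unfolding step f_def[symmetric] g_def[symmetric] by (simp only: mult_ac)
    qed (simp add: mult.commute)
  qed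
qed

lemma Ztil_cross_e1_e2:
  assumes Y: "\<And>z. Y z > 0" and "j \<le> j'"
  shows "Ztil Y (j, -j) (v - e2) * Ztil Y (j', -j') (v - e1)
           \<le> Ztil Y (j, -j) (v - e1) * Ztil Y (j', -j') (v - e2)"
  using Ztil_antidiagonal_cross[OF assms,
      where i = "fst v - 1" and l = "fst v" and n = "fst v + snd v - 1"]
  by (cases v) (simp add: e1_def e2_def algebra_simps)

lemma Ztil_ratio_e1_mono:
  assumes Y: "\<And>z. Y z > 0" and "j \<le> j'" and "fst v + snd v \<noteq> 0"
  shows "Ztil Y (j, -j) v * Ztil Y (j', -j') (v - e1)
           \<le> Ztil Y (j', -j') v * Ztil Y (j, -j) (v - e1)"
proof -
  have last: "Ztil Y (h, -h) v = Y v * (Ztil Y (h, -h) (v - e1) + Ztil Y (h, -h) (v - e2))"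
    for h
    using assms(3) by (intro Ztil_last_step) auto
  have "(Ztil Y (j, -j) (v - e1) + Ztil Y (j, -j) (v - e2)) * Ztil Y (j', -j') (v - e1)
      \<le> (Ztil Y (j', -j') (v - e1) + Ztil Y (j', -j') (v - e2)) * Ztil Y (j, -j) (v - e1)"
    using Ztil_cross_e1_e2[OF Y \<open>j \<le> j'\<close>, where v = v] by (simp add: algebra_simps)
  then show ?thesis
    unfolding last mult.assoc using Y[of v] by (intro mult_left_mono) auto
qed

lemma Ztil_ratio_e2_antimono:
  assumes Y: "\<And>z. Y z > 0" and "j \<le> j'" and "fst v + snd v \<noteq> 0"
  shows "Ztil Y (j, -j) (v - e2) * Ztil Y (j', -j') v
           \<le> Ztil Y (j', -j') (v - e2) * Ztil Y (j, -j) v"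
proof -
  have last: "Ztil Y (h, -h) v = Y v * (Ztil Y (h, -h) (v - e1) + Ztil Y (h, -h) (v - e2))"
    for h
    using assms(3) by (intro Ztil_last_step) auto
  have "Ztil Y (j, -j) (v - e2) * (Ztil Y (j', -j') (v - e1) + Ztil Y (j', -j') (v - e2))
      \<le> Ztil Y (j', -j') (v - e2) * (Ztil Y (j, -j) (v - e1) + Ztil Y (j, -j) (v - e2))"
    using Ztil_cross_e1_e2[OF Y \<open>j \<le> j'\<close>, where v = v] by (simp add: algebra_simps)
  then show ?thesis
    unfolding last mult.left_commute[of _ "Y v"] using Y[of v] by (intro mult_left_mono) auto
qed

lemma sum_antisym_square_eq_0:
  fixes d :: "'a \<Rightarrow> 'a \<Rightarrow> real"
  assumes "\<And>x y. d y x = - d x y"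
  shows "(\<Sum>(x, y) \<in> S \<times> S. d x y) = 0"
proof -
  have "(\<Sum>(x, y) \<in> S \<times> S. d x y) = (\<Sum>y\<in>S. \<Sum>x\<in>S. d x y)"
    unfolding sum.cartesian_product[symmetric] by (rule sum.swap)
  also have "\<dots> = (\<Sum>y\<in>S. \<Sum>x\<in>S. - d y x)"
    by (intro sum.cong refl) (rule assms)
  also have "\<dots> = - (\<Sum>(x, y) \<in> S \<times> S. d x y)"
    by (simp add: sum_negf sum.cartesian_product)
  finally show ?thesis by simp
qed

lemma weighted_sum_cross_le:
  fixes A B W :: "'a::linorder \<Rightarrow> real"
  assumes "finite K1" "finite K2"
    and ratio_mono: "\<And>j j'. j < j' \<Longrightarrow> A j * B j' \<le> A j' * B j"
    and interleave: "\<And>j j'. j \<in> K1 \<Longrightarrow> j' \<in> K2 \<Longrightarrow> j' < j \<Longrightarrow> j \<in> K2 \<and> j' \<in> K1"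
    and W: "\<And>j. W j \<ge> 0"
  shows "(\<Sum>j\<in>K1. W j * A j) * (\<Sum>j\<in>K2. W j * B j)
           \<le> (\<Sum>j\<in>K2. W j * A j) * (\<Sum>j\<in>K1. W j * B j)" (is "?lhs \<le> ?rhs")
proof -
  define d where "d j j' = W j * W j' * (A j * B j' - A j' * B j)" for j j'
  let ?I = "K1 \<inter> K2"
  have "?lhs - ?rhs = (\<Sum>j\<in>K1. \<Sum>j'\<in>K2. W j * A j * (W j' * B j'))
                      - (\<Sum>j'\<in>K2. \<Sum>j\<in>K1. W j' * A j' * (W j * B j))"
    by (simp only: sum_product)
  also have "\<dots> = (\<Sum>j\<in>K1. \<Sum>j'\<in>K2. W j * A j * (W j' * B j') - W j' * A j' * (W j * B j))"
    by (simp only: sum.swap[where A = K2 and B = K1] sum_subtractf)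
  also have "\<dots> = (\<Sum>(j, j') \<in> K1 \<times> K2. d j j')"
    by (simp add: sum.cartesian_product d_def algebra_simps)
  also have "\<dots> = (\<Sum>(j, j') \<in> K1 \<times> K2 - ?I \<times> ?I. d j j') + (\<Sum>(j, j') \<in> ?I \<times> ?I. d j j')"
    by (rule sum.subset_diff) (use assms(1,2) in auto)
  also have "(\<Sum>(j, j') \<in> ?I \<times> ?I. d j j') = 0"
    by (rule sum_antisym_square_eq_0) (simp add: d_def algebra_simps)
  finally have diff: "?lhs - ?rhs = (\<Sum>(j, j') \<in> K1 \<times> K2 - ?I \<times> ?I. d j j')"
    by simp
  have "d j j' \<le> 0" if "j \<in> K1" "j' \<in> K2" "(j, j') \<notin> ?I \<times> ?I" for j j'
  proof -
    from that have "\<not> j' < j" using interleave by blast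
    then consider "j < j'" | "j = j'" by fastforce
    then show ?thesis
    proof cases
      case 1
      then show ?thesis
        using ratio_mono[of j j'] W[of j] W[of j'] unfolding d_def
        by (intro mult_nonneg_nonpos) auto
    qed (simp add: d_def)
  qed
  then have "(\<Sum>(j, j') \<in> K1 \<times> K2 - ?I \<times> ?I. d j j') \<le> 0"
    by (intro sum_nonpos) auto
  with diff show ?thesis by simp
qed

lemma ZW_eq_sum:
  assumes "finite R" and "{- snd v..fst v} \<subseteq> R"
  shows "ZW Y W v K = (\<Sum>j\<in>K \<inter> R. W j * Ztil Y (j, -j) v)"
proof -
  have "Ztil Y (j, -j) v = 0" if "j \<notin> R" for j
  proof -
    from that assms(2) have "j \<notin> {- snd v..fst v}" by blast
    then show ?thesis by (intro Ztil_eq_0) auto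
  qed
  then have "ZW Y W v K = infsum (\<lambda>j. W j * Ztil Y (j, -j) v) (K \<inter> R)"
    unfolding ZW_def by (intro infsum_cong_neutral) auto
  then show ?thesis using assms(1) by simp
qed

lemma ZW_pos:
  assumes Y: "\<And>z. Y z > 0" and W: "\<And>j. W j > 0"
    and "j \<in> K" "- snd v \<le> j" "j \<le> fst v"
  shows "ZW Y W v K > 0"
proof -
  have "W i * Ztil Y (i, -i) v \<ge> 0" for i
    using W[of i] Ztil_nonneg[of Y] Y by (simp add: less_imp_le)
  moreover have "W j * Ztil Y (j, -j) v > 0"
    using assms by (intro mult_pos_pos Ztil_pos) auto
  ultimately show ?thesis
    unfolding ZW_eq_sum[OF finite_atLeastAtMost_int order.refl]
    using assms(3-5) by (intro sum_pos2[of _ j]) auto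
qed

lemma ZW_cross_le:
  assumes W: "\<And>j. W j \<ge> 0"
    and ratio_mono: "\<And>j j'. j < j' \<Longrightarrow>
          Ztil Y (j, -j) v * Ztil Y (j', -j') w \<le> Ztil Y (j', -j') v * Ztil Y (j, -j) w"
    and interleave: "\<And>j j'. j \<in> K1 \<Longrightarrow> j' \<in> K2 \<Longrightarrow> j' < j \<Longrightarrow> j \<in> K2 \<and> j' \<in> K1"
  shows "ZW Y W v K1 * ZW Y W w K2 \<le> ZW Y W v K2 * ZW Y W w K1"
proof -
  define R where "R = {- max (snd v) (snd w)..max (fst v) (fst w)}"
  have "finite R" "{- snd v..fst v} \<subseteq> R" "{- snd w..fst w} \<subseteq> R"
    by (auto simp: R_def)
  note finite_sums = ZW_eq_sum[OF \<open>finite R\<close> this(2)] ZW_eq_sum[OF \<open>finite R\<close> this(3)]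
  show ?thesis
    unfolding finite_sums
    by (intro weighted_sum_cross_le ratio_mono W) (use interleave \<open>finite R\<close> in auto)
qed

theorem propositionA4:
  fixes Y :: "pt \<Rightarrow> real" and W :: "int \<Rightarrow> real" and a :: pt and k :: int
  assumes "\<And>z. Y z > 0"
    and "\<And>j. W j > 0"
    and "W 0 = 1"
    and "fst a > 0" and "snd a > 0"
    and "k \<ge> 1"
  shows "(ZW Y W a {j. \<bar>j\<bar> \<le> k} / ZW Y W (a - e1) {j. \<bar>j\<bar> \<le> k}
           \<le> ZW Y W a {j. j \<ge> 0} / ZW Y W (a - e1) {j. j \<ge> 0}) \<and>
         (ZW Y W a {j. \<bar>j\<bar> \<le> k} / ZW Y W (a - e2) {j. \<bar>j\<bar> \<le> k}
           \<ge> ZW Y W a {j. j \<ge> 0} / ZW Y W (a - e2) {j. j \<ge> 0})"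
proof -
  note Y = assms(1)
  have W: "W j \<ge> 0" for j
    using assms(2) less_imp_le by blast
  have not_source: "fst a + snd a \<noteq> 0"
    using assms(4,5) by linarith
  have interleave: "j \<in> {j. j \<ge> 0} \<and> j' \<in> {j. \<bar>j\<bar> \<le> k}"
    if "j \<in> {j. \<bar>j\<bar> \<le> k}" "j' \<in> {j. j \<ge> 0}" "j' < j" for j j'
    using that by auto
  have "ZW Y W a {j. \<bar>j\<bar> \<le> k} * ZW Y W (a - e1) {j. j \<ge> 0}
      \<le> ZW Y W a {j. j \<ge> 0} * ZW Y W (a - e1) {j. \<bar>j\<bar> \<le> k}"
    by (intro ZW_cross_le W interleave Ztil_ratio_e1_mono[OF Y _ not_source]) auto
  moreover have "ZW Y W (a - e2) {j. \<bar>j\<bar> \<le> k} * ZW Y W a {j. j \<ge> 0}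
      \<le> ZW Y W (a - e2) {j. j \<ge> 0} * ZW Y W a {j. \<bar>j\<bar> \<le> k}"
    by (intro ZW_cross_le W interleave Ztil_ratio_e2_antimono[OF Y _ not_source]) auto
  moreover have "ZW Y W (a - e1) K > 0" "ZW Y W (a - e2) K > 0" if "0 \<in> K" for K
    using assms that by (auto intro!: ZW_pos[of Y W 0] simp: e1_def e2_def)
  ultimately show ?thesis
    using \<open>k \<ge> 1\<close> by (simp add: divide_simps mult.commute)
qed

end
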